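(* Let $V=\{(a_1,a_2,\ldots)\mid a_i\in\mathbb{C},\ \sum_i|a_i|^2<\infty\}$ with quadratic form $f((a_i))=\sum_i a_i^2$, let $A=Cl(V,f)$ be its Clifford algebra, and let $\mathcal{V}=\{v_i\mid i\ge1\}$, where $v_i$ is the sequence with $1$ in position $i$ and $0$ elsewhere. Then the centralizer of $\mathcal{V}$ in $A$ is $\mathbb{C}\cdot1$.
   Context: The Clifford algebra $Cl(V,f)$ is the unital associative $\mathbb{C}$-algebra generated by $V$ and $1$ subject to $v^2=f(v)\cdot1$ for all $v\in V$. The centralizer of a subset $S$ is $\{a\in A\mid as=sa \text{ for all } s\in S\}$. *)

theory Defs
  imports "HOL-Analysis.Analysis" "HOL-Library.Poly_Mapping"
begin

typedef l2 = "{a :: nat \<Rightarrow> complex. summable (\<lambda>i. (cmod (a i))^2)}"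
  by (rule exI[of _ "\<lambda>_. 0"]) simp

definition qf :: "l2 \<Rightarrow> complex" where
  "qf v = suminf (\<lambda>i. (Rep_l2 v i)^2)"

text \<open>Unit sequences; index i (from 0) stands for position i+1 in the paper.\<close>
definition unitv :: "nat \<Rightarrow> l2" where
  "unitv i = Abs_l2 (\<lambda>j. if j = i then 1 else 0)"

datatype 'a fword = FWord "'a list"

instantiation fword :: (type) monoid_add
begin
definition zero_fword :: "'a fword" where "zero_fword = FWord []"
fun plus_fword :: "'a fword \<Rightarrow> 'a fword \<Rightarrow> 'a fword" where
  "plus_fword (FWord xs) (FWord ys) = FWord (xs @ ys)"
instance
proof
  fix a b c :: "'a fword"
  show "a + b + c = a + (b + c)" by (cases a; cases b; cases c) simp
  show "0 + a = a" by (cases a) (simp add: zero_fword_def)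
  show "a + 0 = a" by (cases a) (simp add: zero_fword_def)
qed
end

text \<open>Elements of the free algebra: finitely supported C-linear combinations of words,
  multiplication is concatenation (convolution).\<close>
type_synonym 'a freealg = "'a fword \<Rightarrow>\<^sub>0 complex"

definition gen :: "'a \<Rightarrow> 'a freealg" where
  "gen v = Poly_Mapping.single (FWord [v]) 1"

definition scal :: "complex \<Rightarrow> 'a freealg" where
  "scal c = Poly_Mapping.single (FWord []) c"

text \<open>Two-sided ideals of the free algebra (C-subspaces closed under left and right
  multiplication; scalar multiples are products with scal c).\<close>
definition two_sided_ideal :: "'a freealg set \<Rightarrow> bool" where
  "two_sided_ideal J \<longleftrightarrow> 0 \<in> J \<and> (\<forall>x\<in>J. \<forall>y\<in>J. x + y \<in> J)
     \<and> (\<forall>x\<in>J. \<forall>a b. a * x * b \<in> J)"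

definition ideal_generated :: "'a freealg set \<Rightarrow> 'a freealg set" where
  "ideal_generated R = \<Inter>{J. R \<subseteq> J \<and> two_sided_ideal J}"

definition cl_relations :: "l2 freealg set" where
  "cl_relations =
     {gen u - gen v - gen w | u v w. Rep_l2 u = (\<lambda>i. Rep_l2 v i + Rep_l2 w i)}
   \<union> {gen u - scal c * gen v | u v c. Rep_l2 u = (\<lambda>i. c * Rep_l2 v i)}
   \<union> {gen v * gen v - scal (qf v) | v. True}"

definition cl_ideal :: "l2 freealg set" where
  "cl_ideal = ideal_generated cl_relations"

definition cl_eq :: "l2 freealg \<Rightarrow> l2 freealg \<Rightarrow> bool" where
  "cl_eq p q \<longleftrightarrow> p - q \<in> cl_ideal"

text \<open>Centralizer of the image of the set {v_i} in A (as a set of representatives).\<close>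
definition centralizer_units :: "l2 freealg set" where
  "centralizer_units = {p. \<forall>i. cl_eq (p * gen (unitv i)) (gen (unitv i) * p)}"

end

(* A representative p of an element of the centralizer involves only finitely many vectors of V.
   Their span is enlarged to the span of a finite family f_0, ..., f_(n-1) that is orthonormal for the
   complex bilinear form (isotropic vectors are absorbed into hyperbolic planes) and has finitely
   supported dual vectors v_a; then p is a combination of monomials in the f_a. Since p commutes with
   every finitely supported vector, it commutes with a finitely supported anisotropic z orthogonal to
   all f_a. As z anticommutes with each f_a, this kills the odd part of p. The even part commutes with
   v_a and with v_a - f_a, which is orthogonal to the family, hence with every f_a; averaging over
   conjugation by the f_a (where f_a^2 = 1) then shows that it is a scalar. *)

theory Submission
  imports Defs
begin

notation cl_eq (infix "\<simeq>" 50)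

section \<open>Congruence modulo the Clifford ideal\<close>

lemma two_sided_ideal_ideal_generated: "two_sided_ideal (ideal_generated R)"
  unfolding two_sided_ideal_def ideal_generated_def by blast

lemma ideal_generated_superset: "R \<subseteq> ideal_generated R"
  unfolding ideal_generated_def by blast

lemma two_sided_ideal_mult_left: "two_sided_ideal J \<Longrightarrow> x \<in> J \<Longrightarrow> a * x \<in> J"
  unfolding two_sided_ideal_def by (metis mult_1_right)

lemma two_sided_ideal_mult_right: "two_sided_ideal J \<Longrightarrow> x \<in> J \<Longrightarrow> x * b \<in> J"
  unfolding two_sided_ideal_def by (metis mult_1_left)

lemma two_sided_ideal_uminus: "two_sided_ideal J \<Longrightarrow> x \<in> J \<Longrightarrow> - x \<in> J"
  using two_sided_ideal_mult_left[of J x "-1"] by simp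

lemma two_sided_ideal_cl_ideal: "two_sided_ideal cl_ideal"
  unfolding cl_ideal_def by (rule two_sided_ideal_ideal_generated)

lemma cl_eq_relation: "x - y \<in> cl_relations \<Longrightarrow> x \<simeq> y"
  using ideal_generated_superset unfolding cl_eq_def cl_ideal_def by blast

lemma cl_eq_refl [simp]: "x \<simeq> x"
  using two_sided_ideal_cl_ideal by (simp add: cl_eq_def two_sided_ideal_def)

lemma cl_eq_sym: "x \<simeq> y \<Longrightarrow> y \<simeq> x"
  using two_sided_ideal_uminus[OF two_sided_ideal_cl_ideal] unfolding cl_eq_def by fastforce

lemma cl_eq_add: "x \<simeq> x' \<Longrightarrow> y \<simeq> y' \<Longrightarrow> x + y \<simeq> x' + y'"
  using two_sided_ideal_cl_ideal unfolding cl_eq_def two_sided_ideal_def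
  by (metis add_diff_add)

lemma cl_eq_trans [trans]: "x \<simeq> y \<Longrightarrow> y \<simeq> z \<Longrightarrow> x \<simeq> z"
  using cl_eq_add[of x y y z] by (simp add: cl_eq_def)

lemma cl_eq_uminus: "x \<simeq> x' \<Longrightarrow> - x \<simeq> - x'"
  using two_sided_ideal_uminus[OF two_sided_ideal_cl_ideal] unfolding cl_eq_def
  by (metis minus_diff_eq minus_diff_minus)

lemma cl_eq_diff: "x \<simeq> x' \<Longrightarrow> y \<simeq> y' \<Longrightarrow> x - y \<simeq> x' - y'"
  using cl_eq_add[OF _ cl_eq_uminus] by (metis diff_conv_add_uminus)

lemma cl_eq_mult: "x \<simeq> x' \<Longrightarrow> y \<simeq> y' \<Longrightarrow> x * y \<simeq> x' * y'"
proof -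
  assume "x \<simeq> x'" "y \<simeq> y'"
  then have "(x - x') * y \<in> cl_ideal" "x' * (y - y') \<in> cl_ideal"
    using two_sided_ideal_mult_left two_sided_ideal_mult_right two_sided_ideal_cl_ideal
    unfolding cl_eq_def by blast+
  moreover have "x * y - x' * y' = (x - x') * y + x' * (y - y')"
    by (simp add: algebra_simps)
  ultimately show ?thesis
    using two_sided_ideal_cl_ideal unfolding cl_eq_def two_sided_ideal_def by simp
qed

lemma cl_eq_mult_left: "y \<simeq> y' \<Longrightarrow> x * y \<simeq> x * y'"
  by (simp add: cl_eq_mult)

lemma cl_eq_mult_right: "x \<simeq> x' \<Longrightarrow> x * y \<simeq> x' * y"
  by (simp add: cl_eq_mult)

lemma cl_eq_add_cancel_left: "a + x \<simeq> a' + y \<Longrightarrow> a \<simeq> a' \<Longrightarrow> x \<simeq> y"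
  using cl_eq_diff[of "a + x" "a' + y" a a'] by simp

lemma cl_eq_sum: "(\<And>a. a \<in> A \<Longrightarrow> g a \<simeq> h a) \<Longrightarrow> sum g A \<simeq> sum h A"
  by (induction A rule: infinite_finite_induct) (auto intro: cl_eq_add)

lemma scal_eq_single: "scal c = Poly_Mapping.single 0 c"
  by (simp add: scal_def zero_fword_def)

lemma scal_mult [simp]: "scal c * scal d = scal (c * d)"
  by (simp add: scal_eq_single mult_single)

lemma scal_1 [simp]: "scal 1 = 1"
  by (simp add: scal_eq_single)

lemma scal_0 [simp]: "scal 0 = 0"
  by (simp add: scal_eq_single)

lemma scal_add: "scal (c + d) = scal c + scal d"
  by (simp add: scal_eq_single single_add)

lemma scal_uminus: "scal (- c) = - scal c"
  by (simp add: scal_eq_single single_uminus)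

lemma update_eq_add_single:
  "k \<notin> Poly_Mapping.keys f \<Longrightarrow> Poly_Mapping.update k v f = f + Poly_Mapping.single k v"
  by (intro poly_mapping_eqI) (auto simp: lookup_update lookup_add lookup_single in_keys_iff when_def)

lemma scal_commute: "scal c * x = x * scal c"
proof (induction x rule: update_induct)
  case const
  then show ?case by simp
next
  case (update f a b)
  have "scal c * Poly_Mapping.single a b = Poly_Mapping.single a b * scal c"
    by (simp add: scal_eq_single mult_single mult.commute)
  then show ?case
    using update by (simp add: update_eq_add_single algebra_simps)
qed

lemma mult_scal_commute: "x * (scal c * y) = scal c * (x * y)"
proof -
  have "x * (scal c * y) = x * scal c * y"
    by (simp add: mult.assoc)
  also have "\<dots> = scal c * x * y"
    by (simp only: scal_commute)
  finally show ?thesis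
    by (simp add: mult.assoc)
qed

lemma scal_mult_mult: "scal c * x * (scal d * y) = scal (c * d) * (x * y)"
proof -
  have "scal c * x * (scal d * y) = scal c * (x * scal d) * y"
    by (simp add: mult.assoc)
  also have "\<dots> = scal c * (scal d * x) * y"
    by (simp only: scal_commute[of d x])
  finally show ?thesis
    by (simp flip: mult.assoc)
qed

lemma scal_half_double: "scal (1/2) * (x + x) = x"
proof -
  have "scal (1/2) * (x + x) = (scal (1/2) + scal (1/2)) * x"
    by (simp add: algebra_simps)
  then show ?thesis
    by (simp flip: scal_add)
qed

section \<open>Square-summable sequences and the bilinear form\<close>

definition square_summable :: "(nat \<Rightarrow> complex) \<Rightarrow> bool" where
  "square_summable x \<longleftrightarrow> summable (\<lambda>i. (cmod (x i))\<^sup>2)"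

definition finitely_supported :: "(nat \<Rightarrow> complex) \<Rightarrow> bool" where
  "finitely_supported x \<longleftrightarrow> (\<exists>K. \<forall>i\<ge>K. x i = 0)"

definition unit_seq :: "nat \<Rightarrow> nat \<Rightarrow> complex" where
  "unit_seq i = (\<lambda>j. if j = i then 1 else 0)"

definition bform :: "(nat \<Rightarrow> complex) \<Rightarrow> (nat \<Rightarrow> complex) \<Rightarrow> complex" where
  "bform x y = suminf (\<lambda>i. x i * y i)"

text \<open>Junk unless \<open>x\<close> is square-summable.\<close>
definition gen_seq :: "(nat \<Rightarrow> complex) \<Rightarrow> l2 freealg" where
  "gen_seq x = gen (Abs_l2 x)"

lemma square_summable_Rep_l2: "square_summable (Rep_l2 v)"
  using Rep_l2[of v] by (simp add: square_summable_def)

lemma Rep_l2_Abs_l2: "square_summable x \<Longrightarrow> Rep_l2 (Abs_l2 x) = x"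
  by (rule Abs_l2_inverse) (simp add: square_summable_def)

lemma gen_eq_gen_seq: "gen v = gen_seq (Rep_l2 v)"
  by (simp add: gen_seq_def Rep_l2_inverse)

lemma gen_unitv: "gen (unitv i) = gen_seq (unit_seq i)"
  by (simp add: unitv_def gen_seq_def unit_seq_def)

lemma finitely_supported_imp_square_summable:
  assumes "finitely_supported x"
  shows "square_summable x"
proof -
  obtain K where "\<forall>i\<ge>K. x i = 0"
    using assms unfolding finitely_supported_def by blast
  then show ?thesis
    unfolding square_summable_def by (intro summable_finite[of "{..<K}"]) auto
qed

lemma finitely_supported_unit_seq: "finitely_supported (unit_seq i)"
  unfolding finitely_supported_def unit_seq_def by (intro exI[of _ "Suc i"]) auto

lemma finitely_supported_add:
  assumes "finitely_supported x" "finitely_supported y"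
  shows "finitely_supported (\<lambda>i. x i + y i)"
proof -
  obtain K1 K2 where "\<forall>i\<ge>K1. x i = 0" "\<forall>i\<ge>K2. y i = 0"
    using assms unfolding finitely_supported_def by blast
  then show ?thesis
    unfolding finitely_supported_def by (intro exI[of _ "max K1 K2"]) auto
qed

lemma finitely_supported_scale: "finitely_supported x \<Longrightarrow> finitely_supported (\<lambda>i. c * x i)"
  unfolding finitely_supported_def by auto

lemma finitely_supported_diff:
  "finitely_supported x \<Longrightarrow> finitely_supported y \<Longrightarrow> finitely_supported (\<lambda>i. x i - y i)"
  using finitely_supported_add[of x "\<lambda>i. - y i"] finitely_supported_scale[of y "-1"] by simp

lemma finitely_supported_lincomb:
  "finite A \<Longrightarrow> (\<And>a. a \<in> A \<Longrightarrow> finitely_supported (g a)) \<Longrightarrow>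
    finitely_supported (\<lambda>i. \<Sum>a\<in>A. c a * g a i)"
proof (induction A rule: finite_induct)
  case empty
  then show ?case by (simp add: finitely_supported_def)
next
  case (insert a A)
  then have "finitely_supported (\<lambda>i. c a * g a i + (\<Sum>a\<in>A. c a * g a i))"
    by (intro finitely_supported_add finitely_supported_scale) auto
  with insert(1,2) show ?case
    by simp
qed

lemma square_summable_add:
  assumes "square_summable x" "square_summable y"
  shows "square_summable (\<lambda>i. x i + y i)"
proof -
  have bound: "(cmod (x i + y i))\<^sup>2 \<le> 2 * (cmod (x i))\<^sup>2 + 2 * (cmod (y i))\<^sup>2" for i
  proof -
    have "(cmod (x i + y i))\<^sup>2 \<le> (cmod (x i) + cmod (y i))\<^sup>2"
      by (simp add: power_mono norm_triangle_ineq)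
    also have "\<dots> \<le> 2 * (cmod (x i))\<^sup>2 + 2 * (cmod (y i))\<^sup>2"
      using sum_squares_bound[of "cmod (x i)" "cmod (y i)"] by (simp add: power2_sum)
    finally show ?thesis .
  qed
  have "summable (\<lambda>i. 2 * (cmod (x i))\<^sup>2 + 2 * (cmod (y i))\<^sup>2)"
    using assms unfolding square_summable_def by (intro summable_add summable_mult)
  then show ?thesis
    unfolding square_summable_def
    by (rule summable_comparison_test'[where N = 0]) (use bound in auto)
qed

lemma square_summable_scale: "square_summable x \<Longrightarrow> square_summable (\<lambda>i. c * x i)"
  unfolding square_summable_def
  using summable_mult[of "\<lambda>i. (cmod (x i))\<^sup>2" "(cmod c)\<^sup>2"]
  by (simp add: norm_mult power_mult_distrib)

lemma square_summable_diff:
  "square_summable x \<Longrightarrow> square_summable y \<Longrightarrow> square_summable (\<lambda>i. x i - y i)"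
  using square_summable_add[of x "\<lambda>i. - y i"] square_summable_scale[of y "-1"] by simp

lemma square_summable_lincomb:
  "finite A \<Longrightarrow> (\<And>a. a \<in> A \<Longrightarrow> square_summable (g a)) \<Longrightarrow>
    square_summable (\<lambda>i. \<Sum>a\<in>A. c a * g a i)"
proof (induction A rule: finite_induct)
  case empty
  then show ?case by (simp add: square_summable_def)
next
  case (insert a A)
  then have "square_summable (\<lambda>i. c a * g a i + (\<Sum>a\<in>A. c a * g a i))"
    by (intro square_summable_add square_summable_scale) auto
  with insert(1,2) show ?case
    by simp
qed

lemma square_summable_tendsto_zero:
  assumes "square_summable x"
  shows "x \<longlonglongrightarrow> 0"
proof -
  have "(\<lambda>i. (cmod (x i))\<^sup>2) \<longlonglongrightarrow> 0"
    using assms unfolding square_summable_def by (rule summable_LIMSEQ_zero)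
  then have "(\<lambda>i. sqrt ((cmod (x i))\<^sup>2)) \<longlonglongrightarrow> sqrt 0"
    by (rule tendsto_real_sqrt)
  then show ?thesis
    by (simp add: tendsto_norm_zero_iff)
qed

lemma summable_mult_square_summable:
  assumes "square_summable x" "square_summable y"
  shows "summable (\<lambda>i. x i * y i)"
proof -
  have bound: "norm (x i * y i) \<le> (cmod (x i))\<^sup>2 + (cmod (y i))\<^sup>2" for i
  proof -
    have "2 * cmod (x i) * cmod (y i) \<le> (cmod (x i))\<^sup>2 + (cmod (y i))\<^sup>2"
      by (rule sum_squares_bound)
    moreover have "0 \<le> cmod (x i) * cmod (y i)"
      by simp
    ultimately show ?thesis
      unfolding norm_mult by linarith
  qed
  have "summable (\<lambda>i. (cmod (x i))\<^sup>2 + (cmod (y i))\<^sup>2)"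
    using assms unfolding square_summable_def by (intro summable_add)
  then have "summable (\<lambda>i. norm (x i * y i))"
    by (rule summable_comparison_test'[where N = 0]) (use bound in auto)
  then show ?thesis
    by (rule summable_norm_cancel)
qed

lemma bform_commute: "bform x y = bform y x"
  unfolding bform_def by (simp add: mult.commute)

lemma bform_add_left:
  "square_summable x \<Longrightarrow> square_summable y \<Longrightarrow> square_summable z \<Longrightarrow>
    bform (\<lambda>i. x i + y i) z = bform x z + bform y z"
  unfolding bform_def
  by (simp add: distrib_right suminf_add summable_mult_square_summable)

lemma bform_scale_left:
  "square_summable x \<Longrightarrow> square_summable z \<Longrightarrow> bform (\<lambda>i. c * x i) z = c * bform x z"
  unfolding bform_def
  by (simp add: mult.assoc suminf_mult summable_mult_square_summable)

lemma bform_scale_right: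
  "square_summable x \<Longrightarrow> square_summable z \<Longrightarrow> bform z (\<lambda>i. c * x i) = c * bform z x"
  using bform_scale_left by (simp add: bform_commute)

lemma bform_add_scaled_left:
  assumes "square_summable x" "square_summable y" "square_summable z"
  shows "bform (\<lambda>i. x i + c * y i) z = bform x z + c * bform y z"
  using assms by (simp add: bform_add_left bform_scale_left square_summable_scale)

lemma bform_diff_left:
  "square_summable x \<Longrightarrow> square_summable y \<Longrightarrow> square_summable z \<Longrightarrow>
    bform (\<lambda>i. x i - y i) z = bform x z - bform y z"
  using bform_add_scaled_left[of x y z "-1"] by simp

lemma bform_lincomb_left:
  assumes "finite A" "\<And>a. a \<in> A \<Longrightarrow> square_summable (g a)" "square_summable z"
  shows "bform (\<lambda>i. \<Sum>a\<in>A. c a * g a i) z = (\<Sum>a\<in>A. c a * bform (g a) z)"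
  using assms
proof (induction A rule: finite_induct)
  case empty
  then show ?case by (simp add: bform_def)
next
  case (insert a A)
  have "bform (\<lambda>i. \<Sum>a\<in>insert a A. c a * g a i) z
      = bform (\<lambda>i. c a * g a i + (\<Sum>a\<in>A. c a * g a i)) z"
    using insert(1,2) by simp
  also have "\<dots> = bform (\<lambda>i. c a * g a i) z + bform (\<lambda>i. \<Sum>a\<in>A. c a * g a i) z"
    using insert.prems insert(1) by (intro bform_add_left square_summable_scale square_summable_lincomb) auto
  also have "\<dots> = c a * bform (g a) z + (\<Sum>a\<in>A. c a * bform (g a) z)"
    using insert by (simp add: bform_scale_left)
  finally show ?case
    using insert(1,2) by simp
qed

lemma bform_self_add_scaled:
  assumes "square_summable x" "square_summable y"
  shows "bform (\<lambda>i. x i + c * y i) (\<lambda>i. x i + c * y i) = bform x x + 2 * c * bform x y + c * c * bform y y"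
proof -
  let ?s = "\<lambda>i. x i + c * y i"
  have s: "square_summable ?s"
    using assms by (simp add: square_summable_add square_summable_scale)
  have "bform ?s ?s = bform x ?s + c * bform y ?s"
    using assms s by (rule bform_add_scaled_left)
  also have "bform x ?s = bform x x + c * bform y x"
    using assms by (subst bform_commute) (rule bform_add_scaled_left)
  also have "bform y ?s = bform x y + c * bform y y"
    using assms by (subst bform_commute) (rule bform_add_scaled_left)
  finally show ?thesis
    by (simp add: bform_commute[of y x] algebra_simps)
qed

lemma bform_unit_seq_left: "bform (unit_seq i) y = y i"
proof -
  have "bform (unit_seq i) y = (\<Sum>j<Suc i. unit_seq i j * y j)"
    unfolding bform_def by (rule suminf_finite) (auto simp: unit_seq_def)
  then show ?thesis
    by (simp add: unit_seq_def)
qed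

lemma qf_Abs_l2: "square_summable x \<Longrightarrow> qf (Abs_l2 x) = bform x x"
  by (simp add: qf_def Rep_l2_Abs_l2 bform_def power2_eq_square)

lemma gen_seq_add:
  assumes "square_summable x" "square_summable y"
  shows "gen_seq (\<lambda>i. x i + y i) \<simeq> gen_seq x + gen_seq y"
proof -
  have "Rep_l2 (Abs_l2 (\<lambda>i. x i + y i)) = (\<lambda>i. Rep_l2 (Abs_l2 x) i + Rep_l2 (Abs_l2 y) i)"
    using assms square_summable_add[OF assms] by (simp add: Rep_l2_Abs_l2)
  then have "gen (Abs_l2 (\<lambda>i. x i + y i)) - gen (Abs_l2 x) - gen (Abs_l2 y) \<in> cl_relations"
    unfolding cl_relations_def by blast
  then show ?thesis
    unfolding gen_seq_def by (intro cl_eq_relation) (simp add: diff_diff_eq)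
qed

lemma gen_seq_scale:
  assumes "square_summable x"
  shows "gen_seq (\<lambda>i. c * x i) \<simeq> scal c * gen_seq x"
proof -
  have "Rep_l2 (Abs_l2 (\<lambda>i. c * x i)) = (\<lambda>i. c * Rep_l2 (Abs_l2 x) i)"
    using assms square_summable_scale[OF assms] by (simp add: Rep_l2_Abs_l2)
  then have "gen (Abs_l2 (\<lambda>i. c * x i)) - scal c * gen (Abs_l2 x) \<in> cl_relations"
    unfolding cl_relations_def by blast
  then show ?thesis
    unfolding gen_seq_def by (rule cl_eq_relation)
qed

lemma gen_seq_square:
  assumes "square_summable x"
  shows "gen_seq x * gen_seq x \<simeq> scal (bform x x)"
proof -
  have "gen (Abs_l2 x) * gen (Abs_l2 x) \<simeq> scal (qf (Abs_l2 x))"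
    by (rule cl_eq_relation) (auto simp: cl_relations_def)
  then show ?thesis
    using assms by (simp add: gen_seq_def qf_Abs_l2)
qed

lemma gen_seq_zero: "gen_seq (\<lambda>i. 0) \<simeq> 0"
  using gen_seq_scale[of "\<lambda>i. 0" 0] by (simp add: square_summable_def)

lemma gen_seq_lincomb:
  assumes "finite A" "\<And>a. a \<in> A \<Longrightarrow> square_summable (g a)"
  shows "gen_seq (\<lambda>i. \<Sum>a\<in>A. c a * g a i) \<simeq> (\<Sum>a\<in>A. scal (c a) * gen_seq (g a))"
  using assms
proof (induction A rule: finite_induct)
  case empty
  then show ?case using gen_seq_zero by simp
next
  case (insert a A)
  have "gen_seq (\<lambda>i. \<Sum>a\<in>insert a A. c a * g a i)
      = gen_seq (\<lambda>i. c a * g a i + (\<Sum>a\<in>A. c a * g a i))"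
    using insert(1,2) by simp
  also have "\<dots> \<simeq> gen_seq (\<lambda>i. c a * g a i) + gen_seq (\<lambda>i. \<Sum>a\<in>A. c a * g a i)"
    using insert by (intro gen_seq_add square_summable_scale square_summable_lincomb) auto
  also have "\<dots> \<simeq> scal (c a) * gen_seq (g a) + (\<Sum>a\<in>A. scal (c a) * gen_seq (g a))"
    using insert by (intro cl_eq_add gen_seq_scale) auto
  finally show ?case
    using insert(1,2) by simp
qed

text \<open>Polarisation of \<open>v\<^sup>2 = f(v)\<close>.\<close>
lemma gen_seq_anticommutator:
  assumes "square_summable x" "square_summable y"
  shows "gen_seq x * gen_seq y + gen_seq y * gen_seq x \<simeq> scal (2 * bform x y)"
proof -
  let ?s = "\<lambda>i. x i + y i"
  have s: "square_summable ?s"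
    using square_summable_add[OF assms] .
  have sum: "gen_seq x + gen_seq y \<simeq> gen_seq ?s"
    using cl_eq_sym[OF gen_seq_add[OF assms]] .
  have "(gen_seq x + gen_seq y) * (gen_seq x + gen_seq y) \<simeq> gen_seq ?s * gen_seq ?s"
    using cl_eq_mult[OF sum sum] .
  also have "\<dots> \<simeq> scal (bform ?s ?s)"
    using s by (rule gen_seq_square)
  also have "bform ?s ?s = bform x x + bform y y + 2 * bform x y"
    using bform_self_add_scaled[OF assms, of 1] by simp
  finally have "gen_seq x * gen_seq x + gen_seq y * gen_seq y + (gen_seq x * gen_seq y + gen_seq y * gen_seq x)
      \<simeq> scal (bform x x) + scal (bform y y) + scal (2 * bform x y)"
    by (simp add: algebra_simps scal_add)
  moreover have "gen_seq x * gen_seq x + gen_seq y * gen_seq y \<simeq> scal (bform x x) + scal (bform y y)"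
    using assms by (intro cl_eq_add gen_seq_square)
  ultimately show ?thesis
    by (rule cl_eq_add_cancel_left)
qed

lemma gen_seq_anticommute:
  assumes "square_summable x" "square_summable y" "bform x y = 0"
  shows "gen_seq x * gen_seq y \<simeq> - (gen_seq y * gen_seq x)"
proof -
  have "gen_seq y * gen_seq x + gen_seq x * gen_seq y \<simeq> gen_seq y * gen_seq x + - (gen_seq y * gen_seq x)"
    using gen_seq_anticommutator[OF assms(1,2)] assms(3) by (simp add: add.commute)
  then show ?thesis
    by (rule cl_eq_add_cancel_left) simp
qed

section \<open>Monomials in an orthonormal family\<close>

definition orthonormal :: "nat \<Rightarrow> (nat \<Rightarrow> nat \<Rightarrow> complex) \<Rightarrow> bool" where
  "orthonormal n f \<longleftrightarrow> (\<forall>a<n. square_summable (f a)) \<and>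
     (\<forall>a<n. \<forall>b<n. bform (f a) (f b) = (if a = b then 1 else 0))"

lemma orthonormal_square_summable: "orthonormal n f \<Longrightarrow> a < n \<Longrightarrow> square_summable (f a)"
  by (simp add: orthonormal_def)

lemma orthonormal_bform:
  "orthonormal n f \<Longrightarrow> a < n \<Longrightarrow> b < n \<Longrightarrow> bform (f a) (f b) = (if a = b then 1 else 0)"
  by (simp add: orthonormal_def)

lemma orthonormal_gen_seq_square: "orthonormal n f \<Longrightarrow> a < n \<Longrightarrow> gen_seq (f a) * gen_seq (f a) \<simeq> 1"
  using gen_seq_square orthonormal_square_summable orthonormal_bform by fastforce

primrec monomial :: "(nat \<Rightarrow> nat \<Rightarrow> complex) \<Rightarrow> nat list \<Rightarrow> l2 freealg" where
  "monomial f [] = 1"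
| "monomial f (a # as) = gen_seq (f a) * monomial f as"

lemma monomial_append: "monomial f (as @ bs) = monomial f as * monomial f bs"
  by (induction as) (auto simp: mult.assoc)

type_synonym word_comb = "(complex \<times> nat list) list"

definition eval_comb :: "(nat \<Rightarrow> nat \<Rightarrow> complex) \<Rightarrow> word_comb \<Rightarrow> l2 freealg" where
  "eval_comb f L = (\<Sum>(c, as)\<leftarrow>L. scal c * monomial f as)"

definition words_below :: "nat \<Rightarrow> word_comb \<Rightarrow> bool" where
  "words_below n L \<longleftrightarrow> (\<forall>(c, as)\<in>set L. set as \<subseteq> {..<n})"

definition reweight :: "(nat list \<Rightarrow> complex) \<Rightarrow> word_comb \<Rightarrow> word_comb" where
  "reweight g L = map (\<lambda>(c, as). (c * g as, as)) L"

definition mult_comb :: "word_comb \<Rightarrow> word_comb \<Rightarrow> word_comb" where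
  "mult_comb L M = concat (map (\<lambda>(c, as). map (\<lambda>(d, bs). (c * d, as @ bs)) M) L)"

lemma eval_comb_Nil [simp]: "eval_comb f [] = 0"
  by (simp add: eval_comb_def)

lemma eval_comb_Cons [simp]: "eval_comb f ((c, as) # L) = scal c * monomial f as + eval_comb f L"
  by (simp add: eval_comb_def)

lemma eval_comb_append: "eval_comb f (L @ M) = eval_comb f L + eval_comb f M"
  by (simp add: eval_comb_def)

lemma words_below_Nil [simp]: "words_below n []"
  by (simp add: words_below_def)

lemma words_below_Cons [simp]: "words_below n ((c, as) # L) \<longleftrightarrow> set as \<subseteq> {..<n} \<and> words_below n L"
  by (simp add: words_below_def)

lemma reweight_Nil [simp]: "reweight g [] = []"
  by (simp add: reweight_def)

lemma reweight_Cons [simp]: "reweight g ((c, as) # L) = (c * g as, as) # reweight g L"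
  by (simp add: reweight_def)

lemma reweight_cong: "\<forall>(c, as)\<in>set L. g as = h as \<Longrightarrow> reweight g L = reweight h L"
  by (induction L) auto

lemma reweight_one [simp]: "reweight (\<lambda>_. 1) L = L"
  by (induction L) auto

lemma words_below_reweight: "words_below n L \<Longrightarrow> words_below n (reweight g L)"
  by (induction L) auto

lemma reweight_reweight: "reweight g (reweight h L) = reweight (\<lambda>as. h as * g as) L"
  by (induction L) (auto simp: mult.assoc)

lemma eval_comb_reweight_add:
  "eval_comb f (reweight g L) + eval_comb f (reweight h L) = eval_comb f (reweight (\<lambda>as. g as + h as) L)"
  by (induction L) (auto simp: algebra_simps scal_add)

lemma scal_mult_eval_comb: "scal k * eval_comb f L = eval_comb f (reweight (\<lambda>_. k) L)"
  by (induction L) (auto simp: distrib_left mult.commute simp flip: mult.assoc)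

lemma eval_comb_mult_comb: "eval_comb f (mult_comb L M) = eval_comb f L * eval_comb f M"
proof (induction L)
  case Nil
  then show ?case by (simp add: mult_comb_def)
next
  case (Cons cas L)
  obtain c as where cas: "cas = (c, as)"
    by force
  have "eval_comb f (map (\<lambda>(d, bs). (c * d, as @ bs)) N) = scal c * monomial f as * eval_comb f N" for N
    by (induction N) (auto simp: distrib_left monomial_append scal_mult_mult)
  then show ?case
    using Cons by (simp add: cas mult_comb_def eval_comb_append distrib_right)
qed

lemma words_below_mult_comb: "words_below n L \<Longrightarrow> words_below n M \<Longrightarrow> words_below n (mult_comb L M)"
  by (fastforce simp: words_below_def mult_comb_def)

lemma gen_seq_monomial_commute:
  assumes "square_summable z" "\<forall>b\<in>set as. square_summable (f b)"
    "\<forall>b\<in>set as. (bform z (f b) = 0 \<and> s b = -1) \<or> (f b = z \<and> s b = 1)"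
  shows "gen_seq z * monomial f as \<simeq> scal (\<Prod>b\<leftarrow>as. s b) * monomial f as * gen_seq z"
  using assms(2,3)
proof (induction as)
  case Nil
  then show ?case by (simp add: scal_commute)
next
  case (Cons b as)
  have IH: "gen_seq z * monomial f as \<simeq> scal (\<Prod>b\<leftarrow>as. s b) * monomial f as * gen_seq z"
    using Cons by simp
  have "gen_seq z * gen_seq (f b) \<simeq> scal (s b) * (gen_seq (f b) * gen_seq z)"
  proof (cases "f b = z \<and> s b = 1")
    case True
    then show ?thesis by simp
  next
    case False
    then have "bform z (f b) = 0" "s b = -1"
      using Cons.prems by auto
    then show ?thesis
      using gen_seq_anticommute[OF assms(1)] Cons.prems by (simp add: scal_uminus)
  qed
  then have "gen_seq z * gen_seq (f b) * monomial f as
      \<simeq> scal (s b) * (gen_seq (f b) * gen_seq z) * monomial f as"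
    by (rule cl_eq_mult_right)
  then have "gen_seq z * monomial f (b # as) \<simeq> scal (s b) * (gen_seq (f b) * (gen_seq z * monomial f as))"
    by (simp add: mult.assoc)
  also have "\<dots> \<simeq> scal (s b) * (gen_seq (f b) * (scal (\<Prod>b\<leftarrow>as. s b) * monomial f as * gen_seq z))"
    using IH by (intro cl_eq_mult_left)
  also have "\<dots> = scal (s b) * gen_seq (f b) * (scal (\<Prod>b\<leftarrow>as. s b) * (monomial f as * gen_seq z))"
    by (simp add: mult.assoc)
  also have "\<dots> = scal (\<Prod>b\<leftarrow>b # as. s b) * monomial f (b # as) * gen_seq z"
    by (subst scal_mult_mult) (simp add: mult.assoc)
  finally show ?case .
qed

definition commutation_sign :: "nat \<Rightarrow> nat list \<Rightarrow> complex" where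
  "commutation_sign a as = (\<Prod>b\<leftarrow>as. if b = a then 1 else -1)"

lemma commutation_sign_eq: "commutation_sign a as = (-1) ^ (length as - count_list as a)"
  by (induction as) (auto simp: commutation_sign_def Suc_diff_le count_le_length)

lemma orthonormal_gen_seq_monomial_commute:
  assumes "orthonormal n f" "a < n" "set as \<subseteq> {..<n}"
  shows "gen_seq (f a) * monomial f as \<simeq> scal (commutation_sign a as) * monomial f as * gen_seq (f a)"
  unfolding commutation_sign_def
  using assms orthonormal_square_summable[OF assms(1)] orthonormal_bform[OF assms(1)]
  by (intro gen_seq_monomial_commute) auto

lemma perp_gen_seq_monomial_commute:
  assumes "orthonormal n f" "square_summable z" "\<forall>b<n. bform z (f b) = 0" "set as \<subseteq> {..<n}"
  shows "gen_seq z * monomial f as \<simeq> scal ((-1) ^ length as) * monomial f as * gen_seq z"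
  using gen_seq_monomial_commute[of z as f "\<lambda>_. -1"] assms orthonormal_square_summable[OF assms(1)]
  by (auto simp: map_replicate_const prod_list_replicate)

lemma perp_gen_seq_eval_comb_commute:
  assumes "orthonormal n f" "square_summable z" "\<forall>b<n. bform z (f b) = 0" "words_below n L"
  shows "gen_seq z * eval_comb f L \<simeq> eval_comb f (reweight (\<lambda>as. (-1) ^ length as) L) * gen_seq z"
  using assms(4)
proof (induction L)
  case Nil
  then show ?case by simp
next
  case (Cons cas L)
  obtain c as where cas: "cas = (c, as)"
    by force
  have "gen_seq z * eval_comb f (cas # L) = scal c * (gen_seq z * monomial f as) + gen_seq z * eval_comb f L"
    by (simp add: cas distrib_left mult_scal_commute)
  also have "\<dots> \<simeq> scal c * (scal ((-1) ^ length as) * monomial f as * gen_seq z)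
      + eval_comb f (reweight (\<lambda>as. (-1) ^ length as) L) * gen_seq z"
    using Cons cas by (intro cl_eq_add cl_eq_mult_left perp_gen_seq_monomial_commute[OF assms(1-3)]) auto
  also have "\<dots> = eval_comb f (reweight (\<lambda>as. (-1) ^ length as) (cas # L)) * gen_seq z"
    by (simp add: cas algebra_simps flip: scal_mult)
  finally show ?case .
qed

lemma conjugate_monomial:
  assumes "orthonormal n f" "a < n" "set as \<subseteq> {..<n}"
  shows "gen_seq (f a) * monomial f as * gen_seq (f a) \<simeq> scal (commutation_sign a as) * monomial f as"
proof -
  have "gen_seq (f a) * monomial f as * gen_seq (f a)
      \<simeq> scal (commutation_sign a as) * monomial f as * (gen_seq (f a) * gen_seq (f a))"
    using orthonormal_gen_seq_monomial_commute[OF assms] by (simp add: cl_eq_mult_right flip: mult.assoc)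
  also have "\<dots> \<simeq> scal (commutation_sign a as) * monomial f as * 1"
    using orthonormal_gen_seq_square[OF assms(1,2)] by (rule cl_eq_mult_left)
  finally show ?thesis
    by simp
qed

lemma conjugate_eval_comb:
  assumes "orthonormal n f" "a < n" "words_below n L"
  shows "gen_seq (f a) * eval_comb f L * gen_seq (f a) \<simeq> eval_comb f (reweight (commutation_sign a) L)"
  using assms(3)
proof (induction L)
  case Nil
  then show ?case by simp
next
  case (Cons cas L)
  obtain c as where cas: "cas = (c, as)"
    by force
  have "gen_seq (f a) * eval_comb f (cas # L) * gen_seq (f a)
      = scal c * (gen_seq (f a) * monomial f as * gen_seq (f a)) + gen_seq (f a) * eval_comb f L * gen_seq (f a)"
    by (simp add: cas distrib_left distrib_right mult_scal_commute mult.assoc)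
  also have "\<dots> \<simeq> scal c * (scal (commutation_sign a as) * monomial f as) + eval_comb f (reweight (commutation_sign a) L)"
    using Cons cas by (intro cl_eq_add cl_eq_mult_left conjugate_monomial[OF assms(1,2)]) auto
  also have "\<dots> = eval_comb f (reweight (commutation_sign a) (cas # L))"
    by (simp add: cas flip: mult.assoc)
  finally show ?case .
qed

definition average :: "(nat \<Rightarrow> nat \<Rightarrow> complex) \<Rightarrow> nat \<Rightarrow> l2 freealg \<Rightarrow> l2 freealg" where
  "average f a y = scal (1/2) * (y + gen_seq (f a) * y * gen_seq (f a))"

lemma average_cong: "y \<simeq> y' \<Longrightarrow> average f a y \<simeq> average f a y'"
  unfolding average_def by (intro cl_eq_mult_left cl_eq_add cl_eq_mult_right) auto

lemma average_commuting:
  assumes "orthonormal n f" "a < n" "y * gen_seq (f a) \<simeq> gen_seq (f a) * y"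
  shows "average f a y \<simeq> y"
proof -
  have "gen_seq (f a) * y * gen_seq (f a) \<simeq> y * gen_seq (f a) * gen_seq (f a)"
    using cl_eq_sym[OF assms(3)] by (rule cl_eq_mult_right)
  also have "\<dots> = y * (gen_seq (f a) * gen_seq (f a))"
    by (simp add: mult.assoc)
  also have "\<dots> \<simeq> y * 1"
    using orthonormal_gen_seq_square[OF assms(1,2)] by (rule cl_eq_mult_left)
  finally have "average f a y \<simeq> scal (1/2) * (y + y)"
    unfolding average_def by (intro cl_eq_mult_left cl_eq_add) auto
  then show ?thesis
    by (simp add: scal_half_double)
qed

lemma average_eval_comb:
  assumes "orthonormal n f" "a < n" "words_below n L"
  shows "average f a (eval_comb f L) \<simeq> eval_comb f (reweight (\<lambda>as. (1 + commutation_sign a as) / 2) L)"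
proof -
  have "average f a (eval_comb f L)
      \<simeq> scal (1/2) * (eval_comb f (reweight (\<lambda>_. 1) L) + eval_comb f (reweight (commutation_sign a) L))"
    unfolding average_def using conjugate_eval_comb[OF assms] by (intro cl_eq_mult_left cl_eq_add) auto
  also have "\<dots> = eval_comb f (reweight (\<lambda>as. (1 + commutation_sign a as) / 2) L)"
    by (simp add: eval_comb_reweight_add scal_mult_eval_comb reweight_reweight add_divide_distrib
        del: reweight_one)
  finally show ?thesis .
qed

text \<open>Averaging with the conjugate by \<open>gen_seq (f a)\<close> fixes \<open>x\<close> and multiplies each word by \<open>1\<close> or
  \<open>0\<close> according as it commutes or anticommutes with \<open>gen_seq (f a)\<close>.\<close>
lemma commuting_eval_comb_averaged:
  assumes "orthonormal n f" "\<forall>a<n. x * gen_seq (f a) \<simeq> gen_seq (f a) * x"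
    "x \<simeq> eval_comb f L" "words_below n L" "k \<le> n"
  shows "x \<simeq> eval_comb f (reweight (\<lambda>as. \<Prod>a<k. (1 + commutation_sign a as) / 2) L)"
  using assms(5)
proof (induction k)
  case 0
  then show ?case
    using assms(3) by simp
next
  case (Suc k)
  let ?L = "reweight (\<lambda>as. \<Prod>a<k. (1 + commutation_sign a as) / 2) L"
  have k: "k < n"
    using Suc by simp
  have "x \<simeq> average f k x"
    using assms(1,2) k by (intro cl_eq_sym[OF average_commuting]) auto
  also have "\<dots> \<simeq> average f k (eval_comb f ?L)"
    using Suc k by (intro average_cong) auto
  also have "\<dots> \<simeq> eval_comb f (reweight (\<lambda>as. (1 + commutation_sign k as) / 2) ?L)"
    using assms(1,4) k by (intro average_eval_comb words_below_reweight)
  also have "\<dots> = eval_comb f (reweight (\<lambda>as. \<Prod>a<Suc k. (1 + commutation_sign a as) / 2) L)"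
    by (simp add: reweight_reweight)
  finally show ?case .
qed

lemma monomial_scalar_if_even_counts:
  assumes "orthonormal n f" "set as \<subseteq> {..<n}" "\<forall>a. even (count_list as a)"
  shows "\<exists>d. monomial f as \<simeq> scal d"
  using assms(2,3)
proof (induction "length as" arbitrary: as rule: less_induct)
  case less
  show ?case
  proof (cases as)
    case Nil
    then show ?thesis by (intro exI[of _ 1]) simp
  next
    case (Cons b rest)
    have "odd (count_list rest b)"
      using less.prems(2)[rule_format, of b] Cons by simp
    then have "b \<in> set rest"
      using count_notin by fastforce
    then obtain r1 r2 where rest: "rest = r1 @ b # r2"
      by (meson split_list)
    have b: "b < n" and r1: "set r1 \<subseteq> {..<n}" and r2: "set r2 \<subseteq> {..<n}"
      using less.prems(1) Cons rest by auto
    have "monomial f as = gen_seq (f b) * monomial f r1 * gen_seq (f b) * monomial f r2"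
      using Cons rest by (simp add: monomial_append mult.assoc)
    also have "\<dots> \<simeq> scal (commutation_sign b r1) * monomial f r1 * monomial f r2"
      using conjugate_monomial[OF assms(1) b r1] by (rule cl_eq_mult_right)
    also have "\<dots> = scal (commutation_sign b r1) * monomial f (r1 @ r2)"
      by (simp add: monomial_append mult.assoc)
    finally have as: "monomial f as \<simeq> scal (commutation_sign b r1) * monomial f (r1 @ r2)" .
    have "\<exists>d. monomial f (r1 @ r2) \<simeq> scal d"
    proof (rule less.hyps)
      show "length (r1 @ r2) < length as"
        using Cons rest by simp
      show "set (r1 @ r2) \<subseteq> {..<n}"
        using r1 r2 by simp
      show "\<forall>a. even (count_list (r1 @ r2) a)"
      proof
        fix a
        have "even (count_list as a)"
          using less.prems(2) by blast
        then show "even (count_list (r1 @ r2) a)"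
          using Cons rest by (cases "a = b") auto
      qed
    qed
    then obtain d where "monomial f (r1 @ r2) \<simeq> scal d" ..
    then have "monomial f as \<simeq> scal (commutation_sign b r1) * scal d"
      using as cl_eq_trans cl_eq_mult_left by blast
    then show ?thesis
      by auto
  qed
qed

lemma count_list_even_if_commutation_signs_trivial:
  assumes "set as \<subseteq> {..<n}" "even (length as)" "\<forall>a<n. commutation_sign a as = 1"
  shows "even (count_list as a)"
proof (cases "a < n")
  case True
  then have "even (length as - count_list as a)"
    using assms(3) by (auto simp: commutation_sign_eq minus_one_power_iff split: if_splits)
  then show ?thesis
    using assms(2) count_le_length[of as a] by (simp add: even_diff_nat)
next
  case False
  then show ?thesis
    using assms(1) by (subst count_notin) auto
qed

lemma eval_comb_scalar:
  "(\<And>c as. (c, as) \<in> set L \<Longrightarrow> \<exists>d. scal c * monomial f as \<simeq> scal d) \<Longrightarrow> \<exists>d. eval_comb f L \<simeq> scal d"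
proof (induction L)
  case Nil
  then show ?case by (intro exI[of _ 0]) simp
next
  case (Cons cas L)
  obtain c as where cas: "cas = (c, as)"
    by force
  obtain d1 where "scal c * monomial f as \<simeq> scal d1"
    using Cons.prems cas by auto
  moreover obtain d2 where "eval_comb f L \<simeq> scal d2"
    using Cons by auto
  ultimately have "eval_comb f (cas # L) \<simeq> scal (d1 + d2)"
    by (simp add: cas scal_add cl_eq_add)
  then show ?case ..
qed

text \<open>The only words surviving all averages commute with every \<open>gen_seq (f a)\<close>; an even one
  then contains every letter an even number of times, so it is a scalar.\<close>
lemma commuting_even_eval_comb_scalar:
  assumes "orthonormal n f" "\<forall>a<n. x * gen_seq (f a) \<simeq> gen_seq (f a) * x" "x \<simeq> eval_comb f L"
    "words_below n L" "\<forall>(c, as)\<in>set L. even (length as)"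
  shows "\<exists>d. x \<simeq> scal d"
proof -
  define w where "w as = (\<Prod>a<n. (1 + commutation_sign a as) / 2)" for as
  have "x \<simeq> eval_comb f (reweight w L)"
    unfolding w_def using assms(1-4) by (rule commuting_eval_comb_averaged) simp
  moreover have "\<exists>d. eval_comb f (reweight w L) \<simeq> scal d"
  proof (rule eval_comb_scalar)
    fix c' as
    assume "(c', as) \<in> set (reweight w L)"
    then obtain c where c: "(c, as) \<in> set L" "c' = c * w as"
      by (auto simp: reweight_def)
    then have as: "set as \<subseteq> {..<n}" "even (length as)"
      using assms(4,5) by (auto simp: words_below_def)
    show "\<exists>d. scal c' * monomial f as \<simeq> scal d"
    proof (cases "\<forall>a<n. commutation_sign a as = 1")
      case True
      then obtain d where "monomial f as \<simeq> scal d"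
        using monomial_scalar_if_even_counts[OF assms(1) as(1)]
          count_list_even_if_commutation_signs_trivial[OF as] by blast
      then have "scal c' * monomial f as \<simeq> scal c' * scal d"
        by (rule cl_eq_mult_left)
      then show ?thesis
        by auto
    next
      case False
      then obtain a where a: "a < n" "commutation_sign a as \<noteq> 1"
        by auto
      then have "commutation_sign a as = -1"
        by (auto simp: commutation_sign_eq minus_one_power_iff split: if_splits)
      then have "w as = 0"
        unfolding w_def using a(1) by (intro prod_zero bexI[of _ a]) auto
      then show ?thesis
        using c(2) by (intro exI[of _ 0]) simp
    qed
  qed
  ultimately show ?thesis
    using cl_eq_trans by blast
qed

section \<open>Orthonormal families with finitely supported duals\<close>

lemma sum_mult_delta: "(b::nat) < n \<Longrightarrow> (\<Sum>a<n. c a * (if a = b then 1 else 0)) = (c b :: complex)"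
proof -
  assume b: "b < n"
  have "(\<Sum>a<n. c a * (if a = b then 1 else 0)) = (\<Sum>a<n. if a = b then c a else 0)"
    by (rule sum.cong) auto
  also have "\<dots> = c b"
    using b by (subst sum.delta) auto
  finally show ?thesis .
qed

definition in_span :: "nat \<Rightarrow> (nat \<Rightarrow> nat \<Rightarrow> complex) \<Rightarrow> (nat \<Rightarrow> complex) \<Rightarrow> bool" where
  "in_span n f w \<longleftrightarrow> (\<exists>d. w = (\<lambda>i. \<Sum>a<n. d a * f a i))"

lemma in_span_family: "a < n \<Longrightarrow> in_span n f (f a)"
  unfolding in_span_def
  by (intro exI[of _ "\<lambda>b. if b = a then 1 else 0"] ext)
    (simp add: sum_mult_delta mult.commute[of "if _ then _ else _"])

lemma in_span_add:
  assumes "in_span n f x" "in_span n f y"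
  shows "in_span n f (\<lambda>i. x i + y i)"
proof -
  obtain d e where "x = (\<lambda>i. \<Sum>a<n. d a * f a i)" "y = (\<lambda>i. \<Sum>a<n. e a * f a i)"
    using assms unfolding in_span_def by blast
  then show ?thesis
    unfolding in_span_def by (intro exI[of _ "\<lambda>a. d a + e a"]) (simp add: distrib_right sum.distrib)
qed

lemma in_span_scale:
  assumes "in_span n f x"
  shows "in_span n f (\<lambda>i. c * x i)"
proof -
  obtain d where "x = (\<lambda>i. \<Sum>a<n. d a * f a i)"
    using assms unfolding in_span_def by blast
  then show ?thesis
    unfolding in_span_def by (intro exI[of _ "\<lambda>a. c * d a"]) (simp add: sum_distrib_left mult.assoc)
qed

lemma in_span_mono:
  assumes "in_span n f w" "n \<le> m" "\<forall>a<n. f' a = f a"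
  shows "in_span m f' w"
proof -
  obtain d where d: "w = (\<lambda>i. \<Sum>a<n. d a * f a i)"
    using assms(1) unfolding in_span_def by blast
  have "(\<Sum>a<m. (if a < n then d a else 0) * f' a i) = (\<Sum>a<n. d a * f a i)" for i
  proof -
    have "(\<Sum>a<m. (if a < n then d a else 0) * f' a i) = (\<Sum>a<m. if a < n then d a * f a i else 0)"
      using assms(3) by (intro sum.cong) auto
    also have "\<dots> = (\<Sum>a\<in>{x\<in>{..<m}. x < n}. d a * f a i)"
      by (rule sum.inter_filter[symmetric]) simp
    also have "{x\<in>{..<m}. x < n} = {..<n}"
      using assms(2) by auto
    finally show ?thesis .
  qed
  then show ?thesis
    unfolding in_span_def d by (intro exI[of _ "\<lambda>a. if a < n then d a else 0"]) auto
qed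

lemma bform_lincomb_orthonormal:
  assumes "orthonormal n f" "b < n"
  shows "bform (\<lambda>i. \<Sum>a<n. d a * f a i) (f b) = d b"
proof -
  have "bform (\<lambda>i. \<Sum>a<n. d a * f a i) (f b) = (\<Sum>a<n. d a * bform (f a) (f b))"
    using assms by (intro bform_lincomb_left) (auto intro: orthonormal_square_summable)
  also have "\<dots> = (\<Sum>a<n. d a * (if a = b then 1 else 0))"
    using assms by (intro sum.cong) (auto simp: orthonormal_bform)
  finally show ?thesis
    using assms(2) by (simp add: sum_mult_delta)
qed

text \<open>The \<open>f a\<close> themselves need not be finitely supported, but the dual vectors \<open>v a\<close> are: the
  commutation hypothesis only reaches generators of finitely supported sequences.\<close>
definition dual_system :: "nat \<Rightarrow> (nat \<Rightarrow> nat \<Rightarrow> complex) \<Rightarrow> (nat \<Rightarrow> nat \<Rightarrow> complex) \<Rightarrow> bool" where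
  "dual_system n f v \<longleftrightarrow> orthonormal n f \<and> (\<forall>a<n. finitely_supported (v a)) \<and>
     (\<forall>a<n. \<forall>b<n. bform (v a) (f b) = (if a = b then 1 else 0))"

lemma dual_system_orthonormal: "dual_system n f v \<Longrightarrow> orthonormal n f"
  by (simp add: dual_system_def)

lemma dual_system_finitely_supported: "dual_system n f v \<Longrightarrow> a < n \<Longrightarrow> finitely_supported (v a)"
  by (simp add: dual_system_def)

lemma dual_system_square_summable: "dual_system n f v \<Longrightarrow> a < n \<Longrightarrow> square_summable (v a)"
  by (simp add: dual_system_def finitely_supported_imp_square_summable)

lemma dual_system_bform:
  "dual_system n f v \<Longrightarrow> a < n \<Longrightarrow> b < n \<Longrightarrow> bform (v a) (f b) = (if a = b then 1 else 0)"
  by (simp add: dual_system_def)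

definition unit_perp :: "nat \<Rightarrow> (nat \<Rightarrow> nat \<Rightarrow> complex) \<Rightarrow> (nat \<Rightarrow> nat \<Rightarrow> complex) \<Rightarrow> nat \<Rightarrow> nat \<Rightarrow> complex" where
  "unit_perp n f v i = (\<lambda>j. unit_seq i j - (\<Sum>a<n. f a i * v a j))"

lemma finitely_supported_unit_perp:
  "dual_system n f v \<Longrightarrow> finitely_supported (unit_perp n f v i)"
  unfolding unit_perp_def
  by (intro finitely_supported_diff finitely_supported_unit_seq finitely_supported_lincomb)
    (auto intro: dual_system_finitely_supported)

lemma bform_unit_perp:
  assumes "dual_system n f v" "square_summable y"
  shows "bform (unit_perp n f v i) y = y i - (\<Sum>a<n. f a i * bform (v a) y)"
proof -
  have "square_summable (\<lambda>j. \<Sum>a<n. f a i * v a j)"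
    using assms(1) by (intro square_summable_lincomb) (auto intro: dual_system_square_summable)
  then have "bform (unit_perp n f v i) y = bform (unit_seq i) y - bform (\<lambda>j. \<Sum>a<n. f a i * v a j) y"
    unfolding unit_perp_def
    using assms(2) finitely_supported_imp_square_summable[OF finitely_supported_unit_seq]
    by (intro bform_diff_left)
  also have "bform (\<lambda>j. \<Sum>a<n. f a i * v a j) y = (\<Sum>a<n. f a i * bform (v a) y)"
    using assms by (intro bform_lincomb_left) (auto intro: dual_system_square_summable)
  finally show ?thesis
    by (simp add: bform_unit_seq_left)
qed

lemma bform_unit_perp_family:
  assumes dual: "dual_system n f v" and b: "b < n"
  shows "bform (unit_perp n f v i) (f b) = 0"
proof -
  have "square_summable (f b)"
    using orthonormal_square_summable[OF dual_system_orthonormal[OF dual] b] .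
  then have "bform (unit_perp n f v i) (f b) = f b i - (\<Sum>a<n. f a i * bform (v a) (f b))"
    by (rule bform_unit_perp[OF dual])
  also have "(\<Sum>a<n. f a i * bform (v a) (f b)) = (\<Sum>a<n. f a i * (if a = b then 1 else 0))"
    using dual b by (intro sum.cong) (auto simp: dual_system_bform)
  finally show ?thesis
    using sum_mult_delta[OF b] by simp
qed

lemma exists_finitely_supported_perp_nonorthogonal:
  assumes dual: "dual_system n f v" and u: "square_summable u" "u \<noteq> (\<lambda>i. 0)" "\<forall>a<n. bform u (f a) = 0"
  shows "\<exists>w. finitely_supported w \<and> (\<forall>a<n. bform w (f a) = 0) \<and> bform w u \<noteq> 0"
proof -
  define r where "r = (\<lambda>i. u i - (\<Sum>a<n. f a i * bform (v a) u))"
  have "\<exists>i. r i \<noteq> 0"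
  proof (rule ccontr)
    assume "\<not> (\<exists>i. r i \<noteq> 0)"
    then have u_eq: "u = (\<lambda>i. \<Sum>a<n. bform (v a) u * f a i)"
      by (auto simp: r_def fun_eq_iff mult.commute)
    have "bform (v b) u = 0" if "b < n" for b
      using bform_lincomb_orthonormal[OF dual_system_orthonormal[OF dual] that, of "\<lambda>a. bform (v a) u"]
        u(3) that by (simp flip: u_eq)
    then have "u = (\<lambda>i. 0)"
      by (subst u_eq) simp
    with u(2) show False ..
  qed
  then obtain i where "r i \<noteq> 0"
    by blast
  then show ?thesis
    using finitely_supported_unit_perp[OF dual] bform_unit_perp_family[OF dual]
      bform_unit_perp[OF dual u(1)]
    by (intro exI[of _ "unit_perp n f v i"]) (simp add: r_def)
qed

lemma dual_system_extend:
  assumes dual: "dual_system n f v"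
    and g: "square_summable g" "bform g g = 1" "\<forall>a<n. bform g (f a) = 0"
    and w: "finitely_supported w" "\<forall>a<n. bform w (f a) = 0" "bform w g = 1"
  shows "dual_system (Suc n) (f(n := g)) (\<lambda>a. if a = n then w else (\<lambda>j. v a j - bform (v a) g * w j))"
    (is "dual_system _ ?f ?v")
proof -
  have ortho: "orthonormal n f"
    using dual by (rule dual_system_orthonormal)
  have f: "square_summable (f a)" "bform (f a) g = 0" if "a < n" for a
    using that g(3) orthonormal_square_summable[OF ortho] by (auto simp: bform_commute[of "f a"])
  have sq_w: "square_summable w"
    using w(1) by (rule finitely_supported_imp_square_summable)
  have "orthonormal (Suc n) ?f"
    unfolding orthonormal_def
  proof (intro conjI allI impI)
    fix a
    assume "a < Suc n"
    then show "square_summable (?f a)"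
      using f(1) g(1) by (cases "a = n") auto
  next
    fix a b
    assume "a < Suc n" "b < Suc n"
    then show "bform (?f a) (?f b) = (if a = b then 1 else 0)"
      using f(2) g(2,3) orthonormal_bform[OF ortho] by (cases "a = n"; cases "b = n") auto
  qed
  moreover have "finitely_supported (?v a)" if "a < Suc n" for a
    using that w(1) dual_system_finitely_supported[OF dual]
    by (cases "a = n") (auto intro: finitely_supported_diff finitely_supported_scale)
  moreover have "bform (?v a) (?f b) = (if a = b then 1 else 0)" if ab: "a < Suc n" "b < Suc n" for a b
  proof (cases "a = n")
    case True
    then show ?thesis
      using ab w(2,3) by (cases "b = n") auto
  next
    case False
    then have a: "a < n"
      using ab(1) by simp
    have split: "bform (?v a) y = bform (v a) y - bform (v a) g * bform w y" if "square_summable y" for y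
      using False that sq_w dual_system_square_summable[OF dual a]
      by (simp add: bform_diff_left bform_scale_left square_summable_scale)
    show ?thesis
    proof (cases "b = n")
      case True
      then show ?thesis
        using False split[OF g(1)] w(3) by simp
    next
      case False
      then have b: "b < n"
        using ab(2) by simp
      then show ?thesis
        using False split[OF f(1)[OF b]] w(2) dual_system_bform[OF dual a b] by simp
    qed
  qed
  ultimately show ?thesis
    unfolding dual_system_def by blast
qed

lemma dual_system_extend_anisotropic:
  assumes dual: "dual_system n f v"
    and u: "square_summable u" "\<forall>a<n. bform u (f a) = 0" "bform u u \<noteq> 0"
  shows "\<exists>f' v'. dual_system (Suc n) f' v' \<and> (\<forall>a<n. f' a = f a) \<and> (\<exists>s. u = (\<lambda>i. s * f' n i))"
proof -
  have "u \<noteq> (\<lambda>i. 0)"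
    using u(3) by (auto simp: bform_def)
  then obtain w0 where w0: "finitely_supported w0" "\<forall>a<n. bform w0 (f a) = 0" "bform w0 u \<noteq> 0"
    using exists_finitely_supported_perp_nonorthogonal[OF dual u(1) _ u(2)] by blast
  define s where "s = csqrt (bform u u)"
  have s: "s * s = bform u u" "s \<noteq> 0"
    using u(3) by (auto simp: s_def simp flip: power2_eq_square)
  define g where "g = (\<lambda>i. (1 / s) * u i)"
  define w where "w = (\<lambda>j. (s / bform w0 u) * w0 j)"
  have sq_g: "square_summable g"
    unfolding g_def using u(1) by (rule square_summable_scale)
  have sq_w0: "square_summable w0"
    using w0(1) by (rule finitely_supported_imp_square_summable)
  have sq_f: "square_summable (f a)" if "a < n" for a
    using orthonormal_square_summable[OF dual_system_orthonormal[OF dual] that] .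
  have g_left: "bform g y = (1 / s) * bform u y" if "square_summable y" for y
    using bform_scale_left[OF u(1) that, of "1 / s"] by (simp only: g_def[symmetric])
  have w_left: "bform w y = (s / bform w0 u) * bform w0 y" if "square_summable y" for y
    using bform_scale_left[OF sq_w0 that, of "s / bform w0 u"] by (simp only: w_def[symmetric])
  have "bform g g = 1"
  proof -
    have "bform u g = (1 / s) * bform u u"
      using bform_scale_right[OF u(1) u(1), of "1 / s"] by (simp only: g_def[symmetric])
    then show ?thesis
      using g_left[OF sq_g] s(2) by (simp add: field_simps flip: s(1))
  qed
  moreover have "bform w g = 1"
  proof -
    have "bform w0 g = (1 / s) * bform w0 u"
      using bform_scale_right[OF u(1) sq_w0, of "1 / s"] by (simp only: g_def[symmetric])
    then show ?thesis
      using w_left[OF sq_g] s(2) w0(3) by simp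
  qed
  moreover have "finitely_supported w"
    unfolding w_def using w0(1) by (rule finitely_supported_scale)
  ultimately have "dual_system (Suc n) (f(n := g)) (\<lambda>a. if a = n then w else (\<lambda>j. v a j - bform (v a) g * w j))"
    using w0(2) u(2) g_left[OF sq_f] w_left[OF sq_f]
    by (intro dual_system_extend[OF dual sq_g]) auto
  moreover have "u = (\<lambda>i. s * (f(n := g)) n i)"
    using s(2) by (simp add: g_def)
  moreover have "\<forall>a<n. (f(n := g)) a = f a"
    by simp
  ultimately show ?thesis
    by blast
qed

text \<open>A nonzero isotropic \<open>u\<close> is completed to a hyperbolic plane: first the anisotropic
  \<open>y = u + c w\<^sub>0\<close> is added, then \<open>u - t f' n\<close>, which is anisotropic because \<open>u\<close> is isotropic.\<close>
lemma dual_system_extend_isotropic: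
  assumes dual: "dual_system n f v"
    and u: "square_summable u" "u \<noteq> (\<lambda>i. 0)" "\<forall>a<n. bform u (f a) = 0" "bform u u = 0"
  shows "\<exists>f' v'. dual_system (Suc (Suc n)) f' v' \<and> (\<forall>a<n. f' a = f a) \<and> in_span (Suc (Suc n)) f' u"
proof -
  obtain w0 where w0: "finitely_supported w0" "\<forall>a<n. bform w0 (f a) = 0" "bform w0 u \<noteq> 0"
    using exists_finitely_supported_perp_nonorthogonal[OF dual u(1-3)] by blast
  have sq_w0: "square_summable w0"
    using w0(1) by (rule finitely_supported_imp_square_summable)
  have sq_f: "square_summable (f a)" if "a < n" for a
    using orthonormal_square_summable[OF dual_system_orthonormal[OF dual] that] .
  obtain c :: complex where c: "c \<noteq> 0" "2 * bform w0 u + c * bform w0 w0 \<noteq> 0"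
  proof (cases "2 * bform w0 u + bform w0 w0 = 0")
    case True
    then have "bform w0 w0 = - (2 * bform w0 u)"
      by (simp add: add.commute eq_neg_iff_add_eq_0)
    then show ?thesis
      using w0(3) by (intro that[of 2]) (simp_all add: algebra_simps)
  next
    case False
    then show ?thesis
      by (intro that[of 1]) simp_all
  qed
  define y where "y = (\<lambda>i. u i + c * w0 i)"
  have sq_y: "square_summable y"
    unfolding y_def using u(1) sq_w0 by (intro square_summable_add square_summable_scale)
  have "bform y y = c * (2 * bform w0 u + c * bform w0 w0)"
    unfolding y_def using bform_self_add_scaled[OF u(1) sq_w0, of c] u(4)
    by (simp add: bform_commute[of u w0] algebra_simps)
  then have "bform y y \<noteq> 0"
    using c by simp
  moreover have "\<forall>a<n. bform y (f a) = 0"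
    unfolding y_def using u(1,3) sq_w0 w0(2) sq_f by (simp add: bform_add_scaled_left)
  ultimately obtain f1 v1 s1 where
    f1: "dual_system (Suc n) f1 v1" "\<forall>a<n. f1 a = f a" "y = (\<lambda>i. s1 * f1 n i)"
    using dual_system_extend_anisotropic[OF dual sq_y] by blast
  have sq_f1: "square_summable (f1 a)" if "a < Suc n" for a
    using orthonormal_square_summable[OF dual_system_orthonormal[OF f1(1)] that] .
  have sq_f1n: "square_summable (f1 n)"
    using sq_f1 by simp
  have f1n: "bform (f1 n) (f1 n) = 1"
    using orthonormal_bform[OF dual_system_orthonormal[OF f1(1)], of n n] by simp
  define t where "t = bform u (f1 n)"
  have "s1 * t = bform u y"
    unfolding t_def f1(3) using bform_scale_right[OF sq_f1n u(1), of s1] by simp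
  also have "\<dots> = bform y u"
    by (rule bform_commute)
  also have "\<dots> = c * bform w0 u"
    unfolding y_def using bform_add_scaled_left[OF u(1) sq_w0 u(1), of c] u(4) by simp
  finally have "t \<noteq> 0"
    using c(1) w0(3) by auto
  define u' where "u' = (\<lambda>i. u i + (- t) * f1 n i)"
  have sq_u': "square_summable u'"
    unfolding u'_def using u(1) sq_f1n by (intro square_summable_add square_summable_scale) simp
  have "bform u' u' = - (t * t)"
    unfolding u'_def using bform_self_add_scaled[OF u(1) sq_f1n, of "- t"] u(4) f1n
    by (simp add: t_def algebra_simps)
  then have "bform u' u' \<noteq> 0"
    using \<open>t \<noteq> 0\<close> by simp
  moreover have "\<forall>a<Suc n. bform u' (f1 a) = 0"
  proof (intro allI impI)
    fix a
    assume a: "a < Suc n"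
    have "bform u' (f1 a) = bform u (f1 a) - t * bform (f1 n) (f1 a)"
      unfolding u'_def using bform_add_scaled_left[OF u(1) sq_f1n sq_f1[OF a], of "- t"] by simp
    then show "bform u' (f1 a) = 0"
      using a u(3) f1(2) f1n orthonormal_bform[OF dual_system_orthonormal[OF f1(1)], of n a]
      by (cases "a = n") (auto simp: t_def)
  qed
  ultimately obtain f2 v2 s2 where
    f2: "dual_system (Suc (Suc n)) f2 v2" "\<forall>a<Suc n. f2 a = f1 a" "u' = (\<lambda>i. s2 * f2 (Suc n) i)"
    using dual_system_extend_anisotropic[OF f1(1) sq_u'] by blast
  have "u = (\<lambda>i. t * f2 n i + s2 * f2 (Suc n) i)"
  proof
    fix i
    have "u i = u' i + t * f1 n i"
      by (simp add: u'_def)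
    also have "\<dots> = s2 * f2 (Suc n) i + t * f2 n i"
      using f2(2,3) by simp
    finally show "u i = t * f2 n i + s2 * f2 (Suc n) i"
      by (simp add: add.commute)
  qed
  then have "in_span (Suc (Suc n)) f2 u"
    by (simp only:) (intro in_span_add in_span_scale in_span_family; simp)
  then show ?thesis
    using f1(2) f2(1,2) by (intro exI[of _ f2] exI[of _ v2]) auto
qed

lemma dual_system_extend_span:
  assumes dual: "dual_system n f v" and w: "square_summable w"
  shows "\<exists>n' f' v'. n \<le> n' \<and> dual_system n' f' v' \<and> (\<forall>a<n. f' a = f a) \<and> in_span n' f' w"
proof -
  have ortho: "orthonormal n f"
    using dual by (rule dual_system_orthonormal)
  define p where "p = (\<lambda>i. \<Sum>a<n. bform w (f a) * f a i)"
  define u where "u = (\<lambda>i. w i - p i)"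
  have sq_p: "square_summable p"
    unfolding p_def by (intro square_summable_lincomb) (auto intro: orthonormal_square_summable[OF ortho])
  have sq_u: "square_summable u"
    unfolding u_def using w sq_p by (rule square_summable_diff)
  have u_perp: "\<forall>a<n. bform u (f a) = 0"
    unfolding u_def using w sq_p orthonormal_square_summable[OF ortho]
    by (simp add: bform_diff_left p_def bform_lincomb_orthonormal[OF ortho])
  have "\<exists>n' f' v'. n \<le> n' \<and> dual_system n' f' v' \<and> (\<forall>a<n. f' a = f a) \<and> in_span n' f' u"
  proof -
    consider "u = (\<lambda>i. 0)" | "u \<noteq> (\<lambda>i. 0)" "bform u u = 0" | "bform u u \<noteq> 0"
      by blast
    then show ?thesis
    proof cases
      case 1
      then have "in_span n f u"
        unfolding in_span_def by (intro exI[of _ "\<lambda>_. 0"]) simp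
      then show ?thesis
        using dual by blast
    next
      case 2
      then obtain f' v' where "dual_system (Suc (Suc n)) f' v'" "\<forall>a<n. f' a = f a"
          "in_span (Suc (Suc n)) f' u"
        using dual_system_extend_isotropic[OF dual sq_u _ u_perp] by blast
      then show ?thesis
        by (intro exI[of _ "Suc (Suc n)"] exI[of _ f'] exI[of _ v']) auto
    next
      case 3
      then obtain f' v' s where "dual_system (Suc n) f' v'" "\<forall>a<n. f' a = f a" "u = (\<lambda>i. s * f' n i)"
        using dual_system_extend_anisotropic[OF dual sq_u u_perp] by blast
      moreover have "in_span (Suc n) f' (\<lambda>i. s * f' n i)"
        by (intro in_span_scale in_span_family) simp
      ultimately show ?thesis
        by (intro exI[of _ "Suc n"] exI[of _ f'] exI[of _ v']) auto
    qed
  qed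
  then obtain n' f' v' where ext: "n \<le> n'" "dual_system n' f' v'" "\<forall>a<n. f' a = f a" "in_span n' f' u"
    by blast
  have "in_span n f p"
    unfolding in_span_def p_def by (rule exI[of _ "\<lambda>a. bform w (f a)"]) (rule refl)
  then have "in_span n' f' p"
    using ext(1,3) by (rule in_span_mono)
  then have "in_span n' f' (\<lambda>i. p i + u i)"
    using ext(4) by (rule in_span_add)
  moreover have "(\<lambda>i. p i + u i) = w"
    by (simp add: u_def)
  ultimately show ?thesis
    using ext(1-3) by auto
qed

lemma exists_dual_system_spanning:
  assumes "finite W" "\<forall>w\<in>W. square_summable w"
  shows "\<exists>n f v. dual_system n f v \<and> (\<forall>w\<in>W. in_span n f w)"
  using assms
proof (induction W rule: finite_induct)
  case empty
  have "dual_system 0 (\<lambda>_ _. 0) (\<lambda>_ _. 0)"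
    by (simp add: dual_system_def orthonormal_def)
  then show ?case
    by blast
next
  case (insert w W)
  then obtain n f v where "dual_system n f v" "\<forall>x\<in>W. in_span n f x"
    by auto
  moreover obtain n' f' v' where "n \<le> n'" "dual_system n' f' v'" "\<forall>a<n. f' a = f a" "in_span n' f' w"
    using dual_system_extend_span[OF \<open>dual_system n f v\<close>] insert.prems by blast
  ultimately show ?case
    using in_span_mono by blast
qed

text \<open>For large \<open>i\<close>, \<open>unit_perp n f v i\<close> has square \<open>1 + h i\<close> with \<open>h i \<longlonglongrightarrow> 0\<close>, because the entries
  \<open>f a i\<close> of square-summable sequences tend to \<open>0\<close> while the \<open>v a i\<close> eventually vanish.\<close>
lemma exists_finitely_supported_anisotropic_perp:
  assumes dual: "dual_system n f v"
  shows "\<exists>z. finitely_supported z \<and> (\<forall>a<n. bform z (f a) = 0) \<and> bform z z \<noteq> 0"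
proof -
  have ortho: "orthonormal n f"
    using dual by (rule dual_system_orthonormal)
  define h where "h i = (\<Sum>a<n. \<Sum>b<n. f a i * (f b i * bform (v b) (v a)))" for i
  have "h \<longlonglongrightarrow> 0"
    unfolding h_def using orthonormal_square_summable[OF ortho]
    by (intro tendsto_null_sum tendsto_mult_zero tendsto_mult_left_zero square_summable_tendsto_zero) auto
  then have "eventually (\<lambda>i. dist (h i) 0 < 1) sequentially"
    by (rule tendstoD) simp
  moreover have "eventually (\<lambda>i. \<forall>a\<in>{..<n}. v a i = 0) sequentially"
    using dual_system_finitely_supported[OF dual]
    by (intro eventually_ball_finite) (auto simp: finitely_supported_def eventually_sequentially)
  ultimately have "eventually (\<lambda>i. dist (h i) 0 < 1 \<and> (\<forall>a\<in>{..<n}. v a i = 0)) sequentially"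
    by (rule eventually_conj)
  then obtain N where "\<forall>i\<ge>N. dist (h i) 0 < 1 \<and> (\<forall>a\<in>{..<n}. v a i = 0)"
    unfolding eventually_sequentially by blast
  then obtain i where i: "norm (h i) < 1" "\<forall>a<n. v a i = 0"
    by auto
  define z where "z = unit_perp n f v i"
  have sq_z: "square_summable z"
    unfolding z_def using finitely_supported_unit_perp[OF dual] by (rule finitely_supported_imp_square_summable)
  have "bform (v a) z = - (\<Sum>b<n. f b i * bform (v b) (v a))" if a: "a < n" for a
    using bform_unit_perp[OF dual dual_system_square_summable[OF dual a], of i] i(2) a
    by (simp add: z_def bform_commute[of "v a"])
  then have "(\<Sum>a<n. f a i * bform (v a) z) = - h i"
    by (simp add: h_def sum_distrib_left sum_negf)
  moreover have "z i = 1"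
    using i(2) by (simp add: z_def unit_perp_def unit_seq_def)
  ultimately have "bform z z = 1 + h i"
    using bform_unit_perp[OF dual sq_z, of i] by (simp add: z_def)
  moreover have "1 + h i \<noteq> 0"
  proof
    assume "1 + h i = 0"
    then have "h i = -1"
      by (simp add: add_eq_0_iff)
    then show False
      using i(1) by simp
  qed
  ultimately show ?thesis
    using finitely_supported_unit_perp[OF dual] bform_unit_perp_family[OF dual]
    by (intro exI[of _ z]) (simp add: z_def)
qed

section \<open>The centralizer\<close>

lemma commute_gen_seq_finitely_supported:
  assumes comm: "\<forall>i. p * gen_seq (unit_seq i) \<simeq> gen_seq (unit_seq i) * p" and z: "finitely_supported z"
  shows "p * gen_seq z \<simeq> gen_seq z * p"
proof -
  obtain K where K: "\<forall>i\<ge>K. z i = 0"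
    using z unfolding finitely_supported_def by blast
  have "z = (\<lambda>j. \<Sum>i<K. z i * unit_seq i j)"
  proof
    fix j
    have "(\<Sum>i<K. z i * unit_seq i j) = (\<Sum>i<K. if i = j then z i else 0)"
      by (rule sum.cong) (auto simp: unit_seq_def)
    also have "\<dots> = z j"
      using K by (subst sum.delta) (auto simp: not_less)
    finally show "z j = (\<Sum>i<K. z i * unit_seq i j)" ..
  qed
  then have z_eq: "gen_seq z \<simeq> (\<Sum>i<K. scal (z i) * gen_seq (unit_seq i))"
    using gen_seq_lincomb[of "{..<K}" unit_seq z]
    by (simp add: finitely_supported_imp_square_summable[OF finitely_supported_unit_seq])
  have "p * gen_seq z \<simeq> p * (\<Sum>i<K. scal (z i) * gen_seq (unit_seq i))"
    using z_eq by (rule cl_eq_mult_left)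
  also have "\<dots> = (\<Sum>i<K. scal (z i) * (p * gen_seq (unit_seq i)))"
    by (simp add: sum_distrib_left mult_scal_commute)
  also have "\<dots> \<simeq> (\<Sum>i<K. scal (z i) * (gen_seq (unit_seq i) * p))"
    using comm by (intro cl_eq_sum cl_eq_mult_left) auto
  also have "\<dots> = (\<Sum>i<K. scal (z i) * gen_seq (unit_seq i)) * p"
    by (simp add: sum_distrib_right mult.assoc)
  also have "\<dots> \<simeq> gen_seq z * p"
    using cl_eq_sym[OF z_eq] by (rule cl_eq_mult_right)
  finally show ?thesis .
qed

lemma commute_cl_eq_cong:
  assumes "x \<simeq> x'" "x * y \<simeq> y * x"
  shows "x' * y \<simeq> y * x'"
proof -
  have "x' * y \<simeq> x * y"
    using cl_eq_sym[OF assms(1)] by (rule cl_eq_mult_right)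
  also have "\<dots> \<simeq> y * x"
    by (rule assms(2))
  also have "\<dots> \<simeq> y * x'"
    using assms(1) by (rule cl_eq_mult_left)
  finally show ?thesis .
qed

lemma commute_gen_seq_diff:
  assumes "x * gen_seq u \<simeq> gen_seq u * x" "x * gen_seq r \<simeq> gen_seq r * x"
    "square_summable u" "square_summable r"
  shows "x * gen_seq (\<lambda>i. u i - r i) \<simeq> gen_seq (\<lambda>i. u i - r i) * x"
proof -
  have "gen_seq (\<lambda>i. (u i - r i) + r i) \<simeq> gen_seq (\<lambda>i. u i - r i) + gen_seq r"
    using assms(3,4) by (intro gen_seq_add square_summable_diff)
  then have "gen_seq (\<lambda>i. (u i - r i) + r i) - gen_seq r
      \<simeq> gen_seq (\<lambda>i. u i - r i) + gen_seq r - gen_seq r"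
    using cl_eq_refl by (rule cl_eq_diff)
  then have "gen_seq u - gen_seq r \<simeq> gen_seq (\<lambda>i. u i - r i)"
    by simp
  then have d: "gen_seq (\<lambda>i. u i - r i) \<simeq> gen_seq u - gen_seq r"
    by (rule cl_eq_sym)
  have "x * gen_seq (\<lambda>i. u i - r i) \<simeq> x * (gen_seq u - gen_seq r)"
    using d by (rule cl_eq_mult_left)
  also have "\<dots> = x * gen_seq u - x * gen_seq r"
    by (simp add: algebra_simps)
  also have "\<dots> \<simeq> gen_seq u * x - gen_seq r * x"
    using assms(1,2) by (rule cl_eq_diff)
  also have "\<dots> = (gen_seq u - gen_seq r) * x"
    by (simp add: algebra_simps)
  also have "\<dots> \<simeq> gen_seq (\<lambda>i. u i - r i) * x"
    using cl_eq_sym[OF d] by (rule cl_eq_mult_right)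
  finally show ?thesis .
qed

text \<open>Write \<open>f a = v a - (v a - f a)\<close>, where \<open>v a - f a\<close> is orthogonal to the family.\<close>
lemma commute_family_member:
  assumes dual: "dual_system n f v" and a: "a < n"
    and "x * gen_seq (v a) \<simeq> gen_seq (v a) * x"
    and "\<And>z. square_summable z \<Longrightarrow> \<forall>b<n. bform z (f b) = 0 \<Longrightarrow> x * gen_seq z \<simeq> gen_seq z * x"
  shows "x * gen_seq (f a) \<simeq> gen_seq (f a) * x"
proof -
  have ortho: "orthonormal n f"
    using dual by (rule dual_system_orthonormal)
  define r where "r = (\<lambda>j. v a j - f a j)"
  have sq: "square_summable (v a)" "square_summable (f a)"
    using dual_system_square_summable[OF dual a] orthonormal_square_summable[OF ortho a] .
  have sq_r: "square_summable r"
    unfolding r_def using sq by (rule square_summable_diff)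
  have "\<forall>b<n. bform r (f b) = 0"
    unfolding r_def using sq dual_system_bform[OF dual a] orthonormal_bform[OF ortho a]
      orthonormal_square_summable[OF ortho] by (simp add: bform_diff_left)
  then have "x * gen_seq (\<lambda>j. v a j - r j) \<simeq> gen_seq (\<lambda>j. v a j - r j) * x"
    using assms(3,4) sq(1) sq_r by (intro commute_gen_seq_diff) auto
  moreover have "(\<lambda>j. v a j - r j) = f a"
    by (simp add: r_def)
  ultimately show ?thesis
    by simp
qed

lemma anticommuting_part_vanishes:
  assumes "(x + y) * gen_seq z \<simeq> gen_seq z * (x + y)" "gen_seq z * x \<simeq> x * gen_seq z"
    "gen_seq z * y \<simeq> - y * gen_seq z" "square_summable z" "bform z z \<noteq> 0"
  shows "y \<simeq> 0"
proof -
  have "x * gen_seq z + y * gen_seq z \<simeq> gen_seq z * x + gen_seq z * y"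
    using assms(1) by (simp add: algebra_simps)
  also have "\<dots> \<simeq> x * gen_seq z + - y * gen_seq z"
    using assms(2,3) by (rule cl_eq_add)
  finally have "y * gen_seq z \<simeq> - y * gen_seq z"
    by (rule cl_eq_add_cancel_left) simp
  then have "y * gen_seq z + y * gen_seq z \<simeq> - y * gen_seq z + y * gen_seq z"
    using cl_eq_refl by (rule cl_eq_add)
  then have "scal (1/2) * (y * gen_seq z + y * gen_seq z) \<simeq> scal (1/2) * 0"
    by (intro cl_eq_mult_left) simp
  then have "y * gen_seq z * gen_seq z \<simeq> 0 * gen_seq z"
    by (intro cl_eq_mult_right) (simp add: scal_half_double)
  then have "y * (gen_seq z * gen_seq z) \<simeq> 0"
    by (simp add: mult.assoc)
  moreover have "y * (gen_seq z * gen_seq z) \<simeq> y * scal (bform z z)"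
    using gen_seq_square[OF assms(4)] by (rule cl_eq_mult_left)
  ultimately have "y * scal (bform z z) \<simeq> 0"
    using cl_eq_sym cl_eq_trans by blast
  then have "y * scal (bform z z) * scal (1 / bform z z) \<simeq> 0 * scal (1 / bform z z)"
    by (rule cl_eq_mult_right)
  then show ?thesis
    using assms(5) by (simp add: mult.assoc)
qed

lemma perp_gen_seq_even_comb_commute:
  assumes "orthonormal n f" "square_summable z" "\<forall>b<n. bform z (f b) = 0" "words_below n L"
    "\<forall>(c, as)\<in>set L. even (length as)"
  shows "gen_seq z * eval_comb f L \<simeq> eval_comb f L * gen_seq z"
proof -
  have "reweight (\<lambda>as. (-1) ^ length as) L = reweight (\<lambda>_. 1) L"
    using assms(5) by (intro reweight_cong) (auto simp: minus_one_power_iff)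
  then show ?thesis
    using perp_gen_seq_eval_comb_commute[OF assms(1-4)] by simp
qed

lemma perp_gen_seq_odd_comb_anticommute:
  assumes "orthonormal n f" "square_summable z" "\<forall>b<n. bform z (f b) = 0" "words_below n L"
    "\<forall>(c, as)\<in>set L. odd (length as)"
  shows "gen_seq z * eval_comb f L \<simeq> - eval_comb f L * gen_seq z"
proof -
  have "reweight (\<lambda>as. (-1) ^ length as) L = reweight (\<lambda>_. -1) L"
    using assms(5) by (intro reweight_cong) (auto simp: minus_one_power_iff)
  moreover have "eval_comb f (reweight (\<lambda>_. -1) L) = - eval_comb f L"
    using scal_mult_eval_comb[of "-1" f L] by (simp add: scal_uminus)
  ultimately show ?thesis
    using perp_gen_seq_eval_comb_commute[OF assms(1-4)] by simp
qed

primrec letters :: "'a fword \<Rightarrow> 'a set" where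
  "letters (FWord xs) = set xs"

lemma finite_letters: "finite (letters u)"
  by (cases u) simp

definition in_monomial_span :: "nat \<Rightarrow> (nat \<Rightarrow> nat \<Rightarrow> complex) \<Rightarrow> l2 freealg \<Rightarrow> bool" where
  "in_monomial_span n f x \<longleftrightarrow> (\<exists>L. words_below n L \<and> x \<simeq> eval_comb f L)"

lemma in_monomial_span_add:
  assumes "in_monomial_span n f x" "in_monomial_span n f y"
  shows "in_monomial_span n f (x + y)"
proof -
  obtain L M where "words_below n L" "x \<simeq> eval_comb f L" "words_below n M" "y \<simeq> eval_comb f M"
    using assms unfolding in_monomial_span_def by blast
  then have "words_below n (L @ M)" "x + y \<simeq> eval_comb f (L @ M)"
    by (auto simp: words_below_def eval_comb_append intro: cl_eq_add)
  then show ?thesis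
    unfolding in_monomial_span_def by blast
qed

lemma in_monomial_span_mult:
  assumes "in_monomial_span n f x" "in_monomial_span n f y"
  shows "in_monomial_span n f (x * y)"
proof -
  obtain L M where "words_below n L" "x \<simeq> eval_comb f L" "words_below n M" "y \<simeq> eval_comb f M"
    using assms unfolding in_monomial_span_def by blast
  then have "words_below n (mult_comb L M)" "x * y \<simeq> eval_comb f (mult_comb L M)"
    by (simp_all add: words_below_mult_comb eval_comb_mult_comb cl_eq_mult)
  then show ?thesis
    unfolding in_monomial_span_def by blast
qed

lemma in_monomial_span_scal:
  assumes "in_monomial_span n f x"
  shows "in_monomial_span n f (scal c * x)"
proof -
  obtain L where "words_below n L" "x \<simeq> eval_comb f L"
    using assms unfolding in_monomial_span_def by blast
  then have "words_below n (reweight (\<lambda>_. c) L)" "scal c * x \<simeq> eval_comb f (reweight (\<lambda>_. c) L)"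
    by (simp_all add: words_below_reweight cl_eq_mult_left flip: scal_mult_eval_comb)
  then show ?thesis
    unfolding in_monomial_span_def by blast
qed

lemma in_monomial_span_gen:
  assumes "orthonormal n f" "in_span n f (Rep_l2 x)"
  shows "in_monomial_span n f (gen x)"
proof -
  obtain d where d: "Rep_l2 x = (\<lambda>i. \<Sum>a<n. d a * f a i)"
    using assms(2) unfolding in_span_def by blast
  define L where "L = map (\<lambda>a. (d a, [a])) [0..<n]"
  have "gen x = gen_seq (\<lambda>i. \<Sum>a<n. d a * f a i)"
    by (simp add: gen_eq_gen_seq d)
  also have "\<dots> \<simeq> (\<Sum>a<n. scal (d a) * gen_seq (f a))"
    using assms(1) by (intro gen_seq_lincomb) (auto intro: orthonormal_square_summable)
  also have "\<dots> = eval_comb f L"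
    by (simp add: L_def eval_comb_def comp_def atLeast0LessThan[symmetric]
        sum_set_upt_conv_sum_list_nat[symmetric])
  finally show ?thesis
    unfolding in_monomial_span_def by (intro exI[of _ L]) (auto simp: L_def words_below_def)
qed

lemma in_monomial_span_word:
  assumes "orthonormal n f" "\<forall>x\<in>set xs. in_span n f (Rep_l2 x)"
  shows "in_monomial_span n f (Poly_Mapping.single (FWord xs) 1)"
  using assms(2)
proof (induction xs)
  case Nil
  have "words_below n [(1, [])]" "Poly_Mapping.single (FWord []) 1 \<simeq> eval_comb f [(1, [])]"
    by (simp_all add: zero_fword_def[symmetric])
  then show ?case
    unfolding in_monomial_span_def by blast
next
  case (Cons x xs)
  have "Poly_Mapping.single (FWord (x # xs)) (1::complex) = gen x * Poly_Mapping.single (FWord xs) 1"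
    by (simp add: gen_def mult_single)
  then show ?case
    using Cons assms(1) by (auto intro!: in_monomial_span_mult in_monomial_span_gen)
qed

lemma in_monomial_span_freealg:
  assumes "orthonormal n f" "\<forall>u\<in>Poly_Mapping.keys p. \<forall>x\<in>letters u. in_span n f (Rep_l2 x)"
  shows "in_monomial_span n f p"
  using assms(2)
proof (induction p rule: update_induct)
  case const
  have "words_below n []" "0 \<simeq> eval_comb f []"
    by simp_all
  then show ?case
    unfolding in_monomial_span_def by blast
next
  case (update p u c)
  obtain xs where u: "u = FWord xs"
    by (cases u)
  have keys: "Poly_Mapping.keys (Poly_Mapping.update u c p) = insert u (Poly_Mapping.keys p)"
    using update(2) by (simp add: keys_update)
  have "Poly_Mapping.update u c p = p + scal c * Poly_Mapping.single (FWord xs) 1"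
    using update(1) by (simp add: update_eq_add_single u scal_eq_single mult_single)
  moreover have "in_monomial_span n f (Poly_Mapping.single (FWord xs) 1)"
    using update.prems keys u by (intro in_monomial_span_word[OF assms(1)]) auto
  ultimately show ?case
    using update keys by (auto intro!: in_monomial_span_add in_monomial_span_scal)
qed

lemma commuting_with_unit_gens_scalar:
  assumes comm: "\<forall>i. p * gen_seq (unit_seq i) \<simeq> gen_seq (unit_seq i) * p"
  shows "\<exists>c. p \<simeq> scal c"
proof -
  obtain n f v where dual: "dual_system n f v"
    and span: "\<forall>w\<in>Rep_l2 ` (\<Union>u\<in>Poly_Mapping.keys p. letters u). in_span n f w"
    using exists_dual_system_spanning[of "Rep_l2 ` (\<Union>u\<in>Poly_Mapping.keys p. letters u)"]
    by (auto simp: finite_letters square_summable_Rep_l2)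
  have ortho: "orthonormal n f"
    using dual by (rule dual_system_orthonormal)
  obtain L where L: "words_below n L" "p \<simeq> eval_comb f L"
    using in_monomial_span_freealg[OF ortho] span unfolding in_monomial_span_def by blast
  define x0 where "x0 = eval_comb f (filter (\<lambda>(c, as). even (length as)) L)"
  define x1 where "x1 = eval_comb f (filter (\<lambda>(c, as). odd (length as)) L)"
  have words: "words_below n (filter P L)" for P
    using L(1) by (auto simp: words_below_def)
  have "eval_comb f L = x0 + x1"
    unfolding x0_def x1_def by (induction L) (auto simp: algebra_simps)
  then have p: "p \<simeq> x0 + x1"
    using L(2) by simp
  have x0_perp: "gen_seq z * x0 \<simeq> x0 * gen_seq z" if "square_summable z" "\<forall>b<n. bform z (f b) = 0" for z
    unfolding x0_def using ortho that words by (rule perp_gen_seq_even_comb_commute) auto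
  obtain z where z: "finitely_supported z" "\<forall>a<n. bform z (f a) = 0" "bform z z \<noteq> 0"
    using exists_finitely_supported_anisotropic_perp[OF dual] by blast
  have sq_z: "square_summable z"
    using z(1) by (rule finitely_supported_imp_square_summable)
  have "x1 \<simeq> 0"
  proof (rule anticommuting_part_vanishes[OF _ x0_perp[OF sq_z z(2)] _ sq_z z(3)])
    show "(x0 + x1) * gen_seq z \<simeq> gen_seq z * (x0 + x1)"
      using commute_cl_eq_cong[OF p commute_gen_seq_finitely_supported[OF comm z(1)]] .
    show "gen_seq z * x1 \<simeq> - x1 * gen_seq z"
      unfolding x1_def using ortho sq_z z(2) words by (rule perp_gen_seq_odd_comb_anticommute) auto
  qed
  then have "x0 + x1 \<simeq> x0 + 0"
    by (rule cl_eq_add[OF cl_eq_refl])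
  then have p0: "p \<simeq> x0"
    using cl_eq_trans[OF p] by (simp only: add_0_right)
  have "x0 * gen_seq (f a) \<simeq> gen_seq (f a) * x0" if a: "a < n" for a
    using commute_cl_eq_cong[OF p0 commute_gen_seq_finitely_supported[OF comm]]
      dual_system_finitely_supported[OF dual a] x0_perp
    by (intro commute_family_member[OF dual a]) (auto intro: cl_eq_sym)
  then obtain d where "x0 \<simeq> scal d"
    using commuting_even_eval_comb_scalar[OF ortho _ cl_eq_refl words] unfolding x0_def by auto
  then show ?thesis
    using p0 cl_eq_trans by blast
qed

theorem proposition2:
  shows "centralizer_units = {p. \<exists>c. cl_eq p (scal c)}"
proof (intro set_eqI iffI)
  fix p
  assume "p \<in> centralizer_units"
  then show "p \<in> {p. \<exists>c. cl_eq p (scal c)}"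
    unfolding centralizer_units_def by (simp add: gen_unitv commuting_with_unit_gens_scalar)
next
  fix p
  assume "p \<in> {p. \<exists>c. cl_eq p (scal c)}"
  then obtain c where c: "p \<simeq> scal c"
    by blast
  have "p * gen (unitv i) \<simeq> gen (unitv i) * p" for i
  proof -
    have "p * gen (unitv i) \<simeq> scal c * gen (unitv i)"
      using c by (rule cl_eq_mult_right)
    also have "\<dots> = gen (unitv i) * scal c"
      by (rule scal_commute)
    also have "\<dots> \<simeq> gen (unitv i) * p"
      using cl_eq_sym[OF c] by (rule cl_eq_mult_left)
    finally show ?thesis .
  qed
  then show "p \<in> centralizer_units"
    unfolding centralizer_units_def by blast
qed

end
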